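(* Let $\{\Phi_n\}$ be an irreducible Markov chain on a finite set $\mathsf X$ with transition matrix $P$ and unique invariant probability $\pi$, let $G\colon\mathsf X\to\mathbb{R}^m$, $\xi_n=G(\Phi_n)$, and let $f\colon\mathbb{R}^d\times\mathbb{R}^m\to\mathbb{R}^d$ satisfy: there is $L_f$ with $\|f(\theta',\xi)-f(\theta,\xi)\|+\|f(\theta,\xi')-f(\theta,\xi)\|\le L_f[\|\theta'-\theta\|+\|\xi'-\xi\|]$. Let $\bar f(\theta)=\sum_{z}f(\theta,G(z))\pi(z)$ and let $\hat f(\theta,\cdot)$ be the solution of Poisson's equation $\sum_{z'}P(z,z')\hat f(\theta,z')=\hat f(\theta,z)-[f(\theta,G(z))-\bar f(\theta)]$ normalized by $\sum_z\hat f(\theta,z)\pi(z)=0$. For $\alpha>0$ consider $\theta_{n+1}=\theta_n+\alpha f(\theta_n,\xi_{n+1})$, so that $\Psi_n=(\theta_n,\Phi_n)$ is a Markov chain on $\mathbb{R}^d\times\mathsf X$. Assume $\sup_n\mathsf E[\|\theta_n\|^2]<\infty$ for at least one initial condition, and let $\varpi$ be an invariant probability measure for $\Psi$ under which $\int\|\theta\|\,\varpi(d\theta,dz)<\infty$. Then, for the stationary chain with $\Psi_0\sim\varpi$, for every $n\ge0$, $$\mathsf E[\bar f(\theta_n)]=\alpha\,\mathsf E[\Upsilon_n],\qquad \Upsilon_n:=-\frac1\alpha\big[\hat f(\theta_{n+1},\Phi_{n+2})-\hat f(\theta_n,\Phi_{n+2})\big],$$ and both sides are independent of $n$. *)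

theory Defs
  imports "HOL-Probability.Probability"
begin

definition stochastic_matrix :: "('x::finite \<Rightarrow> 'x \<Rightarrow> real) \<Rightarrow> bool" where
  "stochastic_matrix P \<longleftrightarrow> (\<forall>z z'. 0 \<le> P z z') \<and> (\<forall>z. (\<Sum>z'\<in>UNIV. P z z') = 1)"

fun mat_pow :: "('x::finite \<Rightarrow> 'x \<Rightarrow> real) \<Rightarrow> nat \<Rightarrow> 'x \<Rightarrow> 'x \<Rightarrow> real" where
  "mat_pow P 0 = (\<lambda>z z'. if z = z' then 1 else 0)"
| "mat_pow P (Suc n) = (\<lambda>z z'. \<Sum>y\<in>UNIV. mat_pow P n z y * P y z')"

definition irreducible_matrix :: "('x::finite \<Rightarrow> 'x \<Rightarrow> real) \<Rightarrow> bool" where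
  "irreducible_matrix P \<longleftrightarrow> (\<forall>z z'. \<exists>n. mat_pow P n z z' > 0)"

definition invariant_prob :: "('x::finite \<Rightarrow> 'x \<Rightarrow> real) \<Rightarrow> ('x \<Rightarrow> real) \<Rightarrow> bool" where
  "invariant_prob P \<pi> \<longleftrightarrow> (\<forall>z. 0 \<le> \<pi> z) \<and> (\<Sum>z\<in>UNIV. \<pi> z) = 1
     \<and> (\<forall>z'. (\<Sum>z\<in>UNIV. \<pi> z * P z z') = \<pi> z')"

definition trans_pmf :: "('x::finite \<Rightarrow> 'x \<Rightarrow> real) \<Rightarrow> 'x \<Rightarrow> 'x pmf" where
  "trans_pmf P z = embed_pmf (P z)"

definition state_space :: "('d::euclidean_space \<times> 'x) measure" where
  "state_space = borel \<Otimes>\<^sub>M count_space UNIV"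

definition sa_kernel ::
  "('x::finite \<Rightarrow> 'x \<Rightarrow> real) \<Rightarrow> ('x \<Rightarrow> 'm) \<Rightarrow> ('d::euclidean_space \<Rightarrow> 'm \<Rightarrow> 'd) \<Rightarrow> real
     \<Rightarrow> 'd \<times> 'x \<Rightarrow> ('d \<times> 'x) measure" where
  "sa_kernel P G f \<alpha> \<psi> =
     distr (measure_pmf (trans_pmf P (snd \<psi>))) state_space
       (\<lambda>z'. (fst \<psi> + \<alpha> *\<^sub>R f (fst \<psi>) (G z'), z'))"

fun chain_law :: "('s \<Rightarrow> 's measure) \<Rightarrow> 's measure \<Rightarrow> nat \<Rightarrow> 's measure" where
  "chain_law K \<mu> 0 = \<mu>"
| "chain_law K \<mu> (Suc n) = bind (chain_law K \<mu> n) K"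

text \<open>Joint law of (\<Psi>_n, \<Psi>_{n+1}, \<Psi>_{n+2}) when \<Psi>_0 has law \<mu>.\<close>
definition chain_law3 :: "('s \<Rightarrow> 's measure) \<Rightarrow> 's measure \<Rightarrow> 's measure \<Rightarrow> nat \<Rightarrow> ('s \<times> 's \<times> 's) measure" where
  "chain_law3 K S \<mu> n =
     bind (chain_law K \<mu> n) (\<lambda>\<psi>. bind (K \<psi>) (\<lambda>\<psi>1.
        distr (K \<psi>1) (S \<Otimes>\<^sub>M S \<Otimes>\<^sub>M S) (\<lambda>\<psi>2. (\<psi>, \<psi>1, \<psi>2))))"

end

(*
  Under the stationary law W, condition on the first two transitions. Writing Pfhat for the
  one-step average of fhat, the expectation of fhat(theta_{n+1}, Phi_{n+2}) - fhat(theta_n, Phi_{n+2})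
  equals E[Pfhat(Psi_{n+1})] - E[Pfhat(theta_n, Phi_{n+1})]. Stationarity turns the first term
  into E[Pfhat(Psi_n)], while Poisson's equation rewrites the second as
  E[Pfhat(Psi_n)] - E[f(theta_n, xi_{n+1})] + E[fbar(theta_n)]. Finally
  alpha E[f(theta_n, xi_{n+1})] = E[theta_{n+1} - theta_n] = 0, again by stationarity.

  Integrability: by irreducibility, the normalized solution of Poisson's equation depends
  boundedly on the forcing term, so fhat is Lipschitz in theta; hence every function involved
  grows at most linearly in |theta| and is integrable under W.
*)

theory Submission
  imports Defs
begin

lemma mat_pow_nonneg:
  assumes "stochastic_matrix P"
  shows "0 \<le> mat_pow P n z z'"
  using assms
  by (induction n arbitrary: z') (auto simp: stochastic_matrix_def intro!: sum_nonneg)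

lemma harmonic_max_propagates:
  fixes h :: "'x::finite \<Rightarrow> real"
  assumes P: "stochastic_matrix P"
    and harmonic: "\<And>z. (\<Sum>z'\<in>UNIV. P z z' * h z') = h z"
    and max: "\<And>y. h y \<le> h z"
    and edge: "0 < P z z'"
  shows "h z' = h z"
proof -
  have "(\<Sum>y\<in>UNIV. P z y * (h z - h y)) = h z * (\<Sum>y\<in>UNIV. P z y) - (\<Sum>y\<in>UNIV. P z y * h y)"
    by (simp add: algebra_simps sum_subtractf sum_distrib_left)
  also have "\<dots> = 0"
    using P harmonic[of z] by (simp add: stochastic_matrix_def)
  finally have "(\<Sum>y\<in>UNIV. P z y * (h z - h y)) = 0" .
  moreover have "\<forall>y\<in>UNIV. 0 \<le> P z y * (h z - h y)"
    using P max by (auto simp: stochastic_matrix_def)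
  ultimately have "P z z' * (h z - h z') = 0"
    using sum_nonneg_eq_0_iff[of UNIV "\<lambda>y. P z y * (h z - h y)"] by simp
  with edge show ?thesis by simp
qed

text \<open>Maximum principle: a harmonic function attains its maximum along every path of positive
  probability, and irreducibility makes every state reachable from a maximiser.\<close>

lemma irreducible_harmonic_const:
  fixes h :: "'x::finite \<Rightarrow> real"
  assumes P: "stochastic_matrix P" and irred: "irreducible_matrix P"
    and harmonic: "\<And>z. (\<Sum>z'\<in>UNIV. P z z' * h z') = h z"
  shows "h y = h x"
proof -
  have "Max (range h) \<in> range h"
    by (intro Max_in) auto
  then obtain z0 where z0: "h z0 = Max (range h)"
    by (metis rangeE)
  have max: "h y \<le> h z0" for y
    unfolding z0 by (intro Max_ge) auto
  have reach: "0 < mat_pow P n z0 w \<Longrightarrow> h w = h z0" for n w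
  proof (induction n arbitrary: w)
    case 0
    then show ?case by (auto split: if_splits)
  next
    case (Suc n)
    then obtain y where "mat_pow P n z0 y * P y w \<noteq> 0"
      by (metis (no_types, lifting) less_irrefl mat_pow.simps(2) sum.neutral)
    moreover have "0 \<le> mat_pow P n z0 y" "0 \<le> P y w"
      using mat_pow_nonneg[OF P] P by (auto simp: stochastic_matrix_def)
    ultimately have "0 < mat_pow P n z0 y" "0 < P y w"
      by (auto simp: less_le)
    then show ?case
      using Suc.IH harmonic_max_propagates[OF P harmonic, of y w] max by simp
  qed
  have "h w = h z0" for w
    using irred reach unfolding irreducible_matrix_def by blast
  then show ?thesis by metis
qed

lemma irreducible_harmonic_eq_0:
  fixes h :: "'x::finite \<Rightarrow> real"
  assumes P: "stochastic_matrix P" and irred: "irreducible_matrix P"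
    and \<pi>: "(\<Sum>z\<in>UNIV. \<pi> z) = 1"
    and harmonic: "\<And>z. (\<Sum>z'\<in>UNIV. P z z' * h z') = h z"
    and mean: "(\<Sum>z\<in>UNIV. \<pi> z * h z) = 0"
  shows "h z = 0"
proof -
  obtain c where c: "\<And>y. h y = c"
    using irreducible_harmonic_const[OF P irred harmonic] by blast
  then have "(\<Sum>y\<in>UNIV. \<pi> y * h y) = (\<Sum>y\<in>UNIV. \<pi> y) * h z"
    by (simp add: sum_distrib_right)
  with \<pi> mean show ?thesis by simp
qed

text \<open>The map \<open>v \<mapsto> (v - P v, \<pi> v)\<close> on \<open>\<real>\<^sup>X\<close> is linear and injective, hence bounded below;
  the bound is then applied to each coordinate of a vector-valued solution.\<close>

lemma poisson_solution_bound:
  fixes P :: "'x::finite \<Rightarrow> 'x \<Rightarrow> real"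
  assumes P: "stochastic_matrix P" and irred: "irreducible_matrix P"
    and \<pi>: "(\<Sum>z\<in>UNIV. \<pi> z) = 1"
  obtains C where "0 \<le> C"
    and "\<And>(D :: 'x \<Rightarrow> 'd::euclidean_space) E z.
      (\<And>z. D z - (\<Sum>z'\<in>UNIV. P z z' *\<^sub>R D z') = E z) \<Longrightarrow> (\<Sum>z\<in>UNIV. \<pi> z *\<^sub>R D z) = 0
      \<Longrightarrow> norm (D z) \<le> C * (\<Sum>z\<in>UNIV. norm (E z))"
proof -
  define T :: "real^'x \<Rightarrow> (real^'x) \<times> real" where
    "T v = (\<chi> z. v$z - (\<Sum>z'\<in>UNIV. P z z' * v$z'), \<Sum>z\<in>UNIV. \<pi> z * v$z)" for v
  have lin: "linear T"
    unfolding T_def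
    by (intro linearI) (simp_all add: vec_eq_iff algebra_simps sum.distrib sum_distrib_left)
  have "v = 0" if "T v = 0" for v
  proof -
    have "v$z = 0" for z
    proof (rule irreducible_harmonic_eq_0[OF P irred \<pi>, of "\<lambda>z. v$z"])
      show "(\<Sum>z'\<in>UNIV. P z z' * v$z') = v$z" for z
        using arg_cong[OF that, of "\<lambda>x. fst x $ z"] by (simp add: T_def)
      show "(\<Sum>z\<in>UNIV. \<pi> z * v$z) = 0"
        using arg_cong[OF that, of snd] by (simp add: T_def)
    qed
    then show ?thesis by (simp add: vec_eq_iff)
  qed
  then have "inj T"
    by (simp add: linear_injective_0[OF lin])
  then obtain B where B: "0 < B" "\<And>v. B * norm v \<le> norm (T v)"
    using linear_inj_bounded_below_pos[OF lin] by blast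
  show ?thesis
  proof (rule that[of "real DIM('d) / B"])
    show "0 \<le> real DIM('d) / B"
      using B by simp
    fix D :: "'x \<Rightarrow> 'd" and E z
    assume DE: "\<And>z. D z - (\<Sum>z'\<in>UNIV. P z z' *\<^sub>R D z') = E z"
      and D_mean: "(\<Sum>z\<in>UNIV. \<pi> z *\<^sub>R D z) = 0"
    have coord: "\<bar>D z \<bullet> b\<bar> \<le> (\<Sum>z\<in>UNIV. norm (E z)) / B" if b: "b \<in> Basis" for b
    proof -
      define v :: "real^'x" where "v = (\<chi> z. D z \<bullet> b)"
      have "T v = (\<chi> z. E z \<bullet> b, 0)"
        using arg_cong[OF DE, of "\<lambda>x. x \<bullet> b"] arg_cong[OF D_mean, of "\<lambda>x. x \<bullet> b"]
        by (simp add: T_def v_def vec_eq_iff inner_diff_left inner_sum_left)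
      then have "B * norm v \<le> norm (\<chi> z. E z \<bullet> b)"
        using B(2)[of v] by (simp add: norm_Pair)
      also have "\<dots> \<le> (\<Sum>z\<in>UNIV. \<bar>E z \<bullet> b\<bar>)"
        using norm_le_l1_cart[of "\<chi> z. E z \<bullet> b"] by simp
      also have "\<dots> \<le> (\<Sum>z\<in>UNIV. norm (E z))"
        by (intro sum_mono Basis_le_norm b)
      finally have "B * norm v \<le> (\<Sum>z\<in>UNIV. norm (E z))" .
      moreover have "\<bar>D z \<bullet> b\<bar> \<le> norm v"
        using component_le_norm_cart[of v z] by (simp add: v_def)
      ultimately show ?thesis
        using B(1) by (simp add: pos_le_divide_eq mult.commute)
          (meson less_imp_le mult_left_mono order_trans)
    qed
    have "norm (D z) \<le> (\<Sum>b\<in>Basis. \<bar>D z \<bullet> b\<bar>)"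
      by (rule norm_le_l1)
    also have "\<dots> \<le> (\<Sum>b\<in>(Basis::'d set). (\<Sum>z\<in>UNIV. norm (E z)) / B)"
      by (intro sum_mono coord)
    also have "\<dots> = real DIM('d) / B * (\<Sum>z\<in>UNIV. norm (E z))"
      by simp
    finally show "norm (D z) \<le> real DIM('d) / B * (\<Sum>z\<in>UNIV. norm (E z))" .
  qed
qed

lemma borel_measurable_lipschitz_bound:
  fixes g :: "'a::real_normed_vector \<Rightarrow> 'b::real_normed_vector"
  assumes "\<And>x y. norm (g x - g y) \<le> L * norm (x - y)"
  shows "g \<in> borel_measurable borel"
proof -
  have "(max L 0)-lipschitz_on UNIV g"
  proof (rule lipschitz_onI)
    fix x y
    have "norm (g x - g y) \<le> L * norm (x - y)"
      by (rule assms)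
    also have "\<dots> \<le> max L 0 * norm (x - y)"
      by (intro mult_right_mono) auto
    finally show "dist (g x) (g y) \<le> max L 0 * dist x y"
      by (simp add: dist_norm)
  qed auto
  then show ?thesis
    by (intro borel_measurable_continuous_onI lipschitz_on_continuous_on)
qed

locale mixture_of_images =
  fixes M :: "'a measure" and N :: "'b measure" and I :: "'i set"
    and c :: "'i \<Rightarrow> 'b \<Rightarrow> real" and T :: "'i \<Rightarrow> 'b \<Rightarrow> 'a"
  assumes finite_index: "finite I"
    and measurable_map: "\<And>i. i \<in> I \<Longrightarrow> T i \<in> N \<rightarrow>\<^sub>M M"
    and measurable_weight: "\<And>i. i \<in> I \<Longrightarrow> c i \<in> borel_measurable N"
    and weight_nonneg: "\<And>i y. i \<in> I \<Longrightarrow> 0 \<le> c i y"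
    and nn_integral_mixture: "\<And>g. g \<in> borel_measurable M \<Longrightarrow>
        (\<integral>\<^sup>+x. g x \<partial>M) = (\<integral>\<^sup>+y. (\<Sum>i\<in>I. ennreal (c i y) * g (T i y)) \<partial>N)"
begin

lemma borel_measurable_mixture:
  fixes h :: "'a \<Rightarrow> 'c::{banach, second_countable_topology}"
  assumes "h \<in> borel_measurable M"
  shows "(\<lambda>y. \<Sum>i\<in>I. c i y *\<^sub>R h (T i y)) \<in> borel_measurable N"
  using assms finite_index measurable_map measurable_weight
  by (intro borel_measurable_sum borel_measurable_scaleR) (auto intro: measurable_compose)

lemma nn_integral_mixture_real:
  fixes h :: "'a \<Rightarrow> real"
  assumes "h \<in> borel_measurable M" and "\<And>x. 0 \<le> h x"
  shows "(\<integral>\<^sup>+y. ennreal (\<Sum>i\<in>I. c i y * h (T i y)) \<partial>N) = (\<integral>\<^sup>+x. ennreal (h x) \<partial>M)"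
  using assms weight_nonneg
  by (subst nn_integral_mixture)
    (auto intro!: nn_integral_cong simp: ennreal_mult sum_ennreal[symmetric])

lemma
  fixes h :: "'a \<Rightarrow> real"
  assumes h: "integrable M h" and h_nonneg: "\<And>x. 0 \<le> h x"
  shows integrable_mixture_nonneg: "integrable N (\<lambda>y. \<Sum>i\<in>I. c i y * h (T i y))"
    and integral_mixture_nonneg: "(\<integral>y. (\<Sum>i\<in>I. c i y * h (T i y)) \<partial>N) = integral\<^sup>L M h"
proof -
  have meas: "(\<lambda>y. \<Sum>i\<in>I. c i y * h (T i y)) \<in> borel_measurable N"
    using borel_measurable_mixture[of h] h by simp
  have nonneg: "0 \<le> (\<Sum>i\<in>I. c i y * h (T i y))" for y
    using weight_nonneg h_nonneg by (auto intro!: sum_nonneg)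
  note eq = nn_integral_mixture_real[OF borel_measurable_integrable[OF h] h_nonneg]
  show "integrable N (\<lambda>y. \<Sum>i\<in>I. c i y * h (T i y))"
    using meas nonneg eq h h_nonneg by (intro integrableI_nonneg) (auto simp: integrable_iff_bounded)
  show "(\<integral>y. (\<Sum>i\<in>I. c i y * h (T i y)) \<partial>N) = integral\<^sup>L M h"
    using meas nonneg eq h h_nonneg by (simp add: integral_eq_nn_integral)
qed

lemma integrable_mixture:
  fixes h :: "'a \<Rightarrow> 'c::{banach, second_countable_topology}"
  assumes h: "integrable M h"
  shows "integrable N (\<lambda>y. \<Sum>i\<in>I. c i y *\<^sub>R h (T i y))"
proof (rule Bochner_Integration.integrable_bound)
  show "integrable N (\<lambda>y. \<Sum>i\<in>I. c i y * norm (h (T i y)))"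
    using h by (intro integrable_mixture_nonneg) auto
  show "(\<lambda>y. \<Sum>i\<in>I. c i y *\<^sub>R h (T i y)) \<in> borel_measurable N"
    using h by (intro borel_measurable_mixture) auto
  show "AE y in N. norm (\<Sum>i\<in>I. c i y *\<^sub>R h (T i y)) \<le> norm (\<Sum>i\<in>I. c i y * norm (h (T i y)))"
  proof (intro AE_I2)
    fix y
    have "norm (\<Sum>i\<in>I. c i y *\<^sub>R h (T i y)) \<le> (\<Sum>i\<in>I. c i y * norm (h (T i y)))"
      using norm_sum[of "\<lambda>i. c i y *\<^sub>R h (T i y)" I] weight_nonneg by simp
    then show "norm (\<Sum>i\<in>I. c i y *\<^sub>R h (T i y)) \<le> norm (\<Sum>i\<in>I. c i y * norm (h (T i y)))"
      by simp
  qed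
qed

lemma integral_mixture_real:
  fixes h :: "'a \<Rightarrow> real"
  assumes h: "integrable M h"
  shows "(\<integral>y. (\<Sum>i\<in>I. c i y * h (T i y)) \<partial>N) = integral\<^sup>L M h"
proof -
  define hp where "hp x = max (h x) 0" for x
  define hn where "hn x = max (- h x) 0" for x
  have int: "integrable M hp" "integrable M hn"
    using h unfolding hp_def hn_def by auto
  have nonneg: "0 \<le> hp x" "0 \<le> hn x" for x
    unfolding hp_def hn_def by simp_all
  have split: "h x = hp x - hn x" for x
    unfolding hp_def hn_def by simp
  have "(\<integral>y. (\<Sum>i\<in>I. c i y * h (T i y)) \<partial>N)
      = (\<integral>y. (\<Sum>i\<in>I. c i y * hp (T i y)) - (\<Sum>i\<in>I. c i y * hn (T i y)) \<partial>N)"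
    by (simp add: split right_diff_distrib sum_subtractf)
  also have "\<dots> = integral\<^sup>L M hp - integral\<^sup>L M hn"
    using int nonneg by (simp add: integrable_mixture_nonneg integral_mixture_nonneg)
  also have "\<dots> = integral\<^sup>L M h"
    using int by (simp add: split[abs_def])
  finally show ?thesis .
qed

lemma integral_mixture:
  fixes h :: "'a \<Rightarrow> 'c::euclidean_space"
  assumes h: "integrable M h"
  shows "(\<integral>y. (\<Sum>i\<in>I. c i y *\<^sub>R h (T i y)) \<partial>N) = integral\<^sup>L M h"
proof (rule euclidean_eqI)
  fix b :: 'c
  assume "b \<in> Basis"
  have "(\<integral>y. (\<Sum>i\<in>I. c i y *\<^sub>R h (T i y)) \<partial>N) \<bullet> b = (\<integral>y. (\<Sum>i\<in>I. c i y *\<^sub>R h (T i y)) \<bullet> b \<partial>N)"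
    using integrable_mixture[OF h] by simp
  also have "\<dots> = (\<integral>y. (\<Sum>i\<in>I. c i y * (h (T i y) \<bullet> b)) \<partial>N)"
    by (simp add: inner_sum_left)
  also have "\<dots> = (\<integral>x. h x \<bullet> b \<partial>M)"
    using h by (intro integral_mixture_real) simp
  also have "\<dots> = integral\<^sup>L M h \<bullet> b"
    using h by simp
  finally show "(\<integral>y. (\<Sum>i\<in>I. c i y *\<^sub>R h (T i y)) \<partial>N) \<bullet> b = integral\<^sup>L M h \<bullet> b" .
qed

lemma integrable_of_mixture:
  fixes h :: "'a \<Rightarrow> 'c::{banach, second_countable_topology}"
  assumes h: "h \<in> borel_measurable M"
    and int: "integrable N (\<lambda>y. \<Sum>i\<in>I. c i y * norm (h (T i y)))"
  shows "integrable M h"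
proof -
  have "(\<integral>\<^sup>+x. ennreal (norm (h x)) \<partial>M) = (\<integral>\<^sup>+y. ennreal (\<Sum>i\<in>I. c i y * norm (h (T i y))) \<partial>N)"
    using nn_integral_mixture_real[of "\<lambda>x. norm (h x)"] h by simp
  also have "\<dots> < \<infinity>"
    using int weight_nonneg by (simp add: integrable_iff_bounded sum_nonneg)
  finally show ?thesis
    using h by (simp add: integrable_iff_bounded)
qed

end

definition sa_step :: "('d::euclidean_space \<Rightarrow> 'm \<Rightarrow> 'd) \<Rightarrow> ('x \<Rightarrow> 'm) \<Rightarrow> real \<Rightarrow> 'd \<times> 'x \<Rightarrow> 'x \<Rightarrow> 'd \<times> 'x" where
  "sa_step f G \<alpha> \<psi> z' = (fst \<psi> + \<alpha> *\<^sub>R f (fst \<psi>) (G z'), z')"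

definition sa_path2 :: "('d::euclidean_space \<Rightarrow> 'm \<Rightarrow> 'd) \<Rightarrow> ('x \<Rightarrow> 'm) \<Rightarrow> real \<Rightarrow> 'x \<times> 'x \<Rightarrow> 'd \<times> 'x
    \<Rightarrow> ('d \<times> 'x) \<times> ('d \<times> 'x) \<times> ('d \<times> 'x)" where
  "sa_path2 f G \<alpha> zs \<psi> =
     (\<psi>, sa_step f G \<alpha> \<psi> (fst zs), sa_step f G \<alpha> (sa_step f G \<alpha> \<psi> (fst zs)) (snd zs))"

lemma snd_sa_step [simp]: "snd (sa_step f G \<alpha> \<psi> z') = z'"
  by (simp add: sa_step_def)

lemma sa_kernel_eq_distr:
  "sa_kernel P G f \<alpha> \<psi> = distr (measure_pmf (trans_pmf P (snd \<psi>))) state_space (sa_step f G \<alpha> \<psi>)"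
  by (simp add: sa_kernel_def sa_step_def[abs_def])

lemma sets_sa_kernel [simp]: "sets (sa_kernel P G f \<alpha> \<psi>) = sets state_space"
  by (simp add: sa_kernel_def)

lemma space_state_space [simp]: "space state_space = UNIV"
  by (simp add: state_space_def space_pair_measure)

lemma space_sa_kernel [simp]: "space (sa_kernel P G f \<alpha> \<psi>) = UNIV"
  using sets_eq_imp_space_eq[OF sets_sa_kernel] by simp

lemma pmf_trans_pmf:
  assumes "stochastic_matrix P"
  shows "pmf (trans_pmf P z) z' = P z z'"
  unfolding trans_pmf_def
  using assms
  by (intro pmf_embed_pmf)
    (auto simp: stochastic_matrix_def nn_integral_count_space_finite sum_ennreal)

lemma measurable_sa_step:
  fixes f :: "'d::euclidean_space \<Rightarrow> 'm \<Rightarrow> 'd" and G :: "'x::finite \<Rightarrow> 'm"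
  assumes f_meas: "\<And>\<xi>. (\<lambda>\<theta>. f \<theta> \<xi>) \<in> borel_measurable borel"
  shows "(\<lambda>\<psi>. sa_step f G \<alpha> \<psi> z') \<in> state_space \<rightarrow>\<^sub>M state_space"
  unfolding sa_step_def state_space_def
  using f_meas by measurable

lemma measurable_sa_kernel:
  fixes f :: "'d::euclidean_space \<Rightarrow> 'm \<Rightarrow> 'd" and G :: "'x::finite \<Rightarrow> 'm"
  assumes f_meas: "\<And>\<xi>. (\<lambda>\<theta>. f \<theta> \<xi>) \<in> borel_measurable borel"
  shows "sa_kernel P G f \<alpha> \<in> state_space \<rightarrow>\<^sub>M subprob_algebra state_space"
  unfolding sa_kernel_eq_distr[abs_def]
proof (rule measurable_distr2[where M="count_space UNIV"])
  have step: "(\<lambda>x. sa_step f G \<alpha> (fst x) z) \<in> state_space \<Otimes>\<^sub>M count_space UNIV \<rightarrow>\<^sub>M state_space" for z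
    using measurable_sa_step[OF f_meas] by measurable
  show "(\<lambda>(\<psi>, z'). sa_step f G \<alpha> \<psi> z') \<in> state_space \<Otimes>\<^sub>M count_space UNIV \<rightarrow>\<^sub>M state_space"
    using measurable_compose_countable'[where f="\<lambda>z x. sa_step f G \<alpha> (fst x) z", OF step measurable_snd]
    by (simp add: case_prod_beta')
  show "(\<lambda>\<psi>. measure_pmf (trans_pmf P (snd \<psi>))) \<in> state_space \<rightarrow>\<^sub>M subprob_algebra (count_space UNIV)"
    by (rule measurable_compose[OF _ measurable_measure_pmf]) (simp add: state_space_def)
qed

lemma nn_integral_sa_kernel:
  assumes P: "stochastic_matrix P"
    and u: "u \<in> borel_measurable state_space"
  shows "(\<integral>\<^sup>+x. u x \<partial>sa_kernel P G f \<alpha> \<psi>)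
      = (\<Sum>z'\<in>UNIV. ennreal (P (snd \<psi>) z') * u (sa_step f G \<alpha> \<psi> z'))"
  using u
  by (simp add: sa_kernel_eq_distr nn_integral_distr nn_integral_measure_pmf
      nn_integral_count_space_finite pmf_trans_pmf[OF P])

lemma nn_integral_bind_sa_kernel:
  fixes f :: "'d::euclidean_space \<Rightarrow> 'm \<Rightarrow> 'd" and G :: "'x::finite \<Rightarrow> 'm"
  assumes P: "stochastic_matrix P"
    and f_meas: "\<And>\<xi>. (\<lambda>\<theta>. f \<theta> \<xi>) \<in> borel_measurable borel"
    and sets_\<mu>: "sets \<mu> = sets state_space"
    and g: "g \<in> borel_measurable state_space"
  shows "(\<integral>\<^sup>+x. g x \<partial>bind \<mu> (sa_kernel P G f \<alpha>))
      = (\<integral>\<^sup>+\<psi>. (\<Sum>z'\<in>UNIV. ennreal (P (snd \<psi>) z') * g (sa_step f G \<alpha> \<psi> z')) \<partial>\<mu>)"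
proof -
  have "sa_kernel P G f \<alpha> \<in> \<mu> \<rightarrow>\<^sub>M subprob_algebra state_space"
    using measurable_sa_kernel[OF f_meas] by (simp add: measurable_cong_sets[OF sets_\<mu> refl])
  then show ?thesis
    by (simp add: nn_integral_bind[OF g] nn_integral_sa_kernel[OF P g])
qed

lemma measurable_sa_kernel_extend:
  fixes f :: "'d::euclidean_space \<Rightarrow> 'm \<Rightarrow> 'd" and G :: "'x::finite \<Rightarrow> 'm"
  assumes f_meas: "\<And>\<xi>. (\<lambda>\<theta>. f \<theta> \<xi>) \<in> borel_measurable borel"
  shows "(\<lambda>x. distr (sa_kernel P G f \<alpha> (snd x)) (state_space \<Otimes>\<^sub>M state_space \<Otimes>\<^sub>M state_space)
      (\<lambda>\<psi>2. (fst x, snd x, \<psi>2)))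
    \<in> state_space \<Otimes>\<^sub>M state_space \<rightarrow>\<^sub>M subprob_algebra (state_space \<Otimes>\<^sub>M state_space \<Otimes>\<^sub>M state_space)"
proof (rule measurable_distr2[where M=state_space])
  show "(\<lambda>x. sa_kernel P G f \<alpha> (snd x)) \<in> state_space \<Otimes>\<^sub>M state_space \<rightarrow>\<^sub>M subprob_algebra state_space"
    by (rule measurable_compose[OF measurable_snd measurable_sa_kernel[OF f_meas]])
qed measurable

lemma nn_integral_sa_two_steps:
  fixes f :: "'d::euclidean_space \<Rightarrow> 'm \<Rightarrow> 'd" and G :: "'x::finite \<Rightarrow> 'm"
  assumes P: "stochastic_matrix P"
    and f_meas: "\<And>\<xi>. (\<lambda>\<theta>. f \<theta> \<xi>) \<in> borel_measurable borel"
    and g: "g \<in> borel_measurable (state_space \<Otimes>\<^sub>M state_space \<Otimes>\<^sub>M state_space)"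
  shows "(\<integral>\<^sup>+w. g w \<partial>bind (sa_kernel P G f \<alpha> \<psi>) (\<lambda>\<psi>1.
        distr (sa_kernel P G f \<alpha> \<psi>1) (state_space \<Otimes>\<^sub>M state_space \<Otimes>\<^sub>M state_space) (\<lambda>\<psi>2. (\<psi>, \<psi>1, \<psi>2))))
    = (\<Sum>zs\<in>UNIV. ennreal (P (snd \<psi>) (fst zs) * P (fst zs) (snd zs)) * g (sa_path2 f G \<alpha> zs \<psi>))"
proof -
  let ?S = "state_space :: ('d \<times> 'x) measure"
  let ?S3 = "?S \<Otimes>\<^sub>M ?S \<Otimes>\<^sub>M ?S"
  let ?K = "sa_kernel P G f \<alpha>"
  have D: "(\<lambda>\<psi>1. distr (?K \<psi>1) ?S3 (\<lambda>\<psi>2. (\<psi>, \<psi>1, \<psi>2))) \<in> ?K \<psi> \<rightarrow>\<^sub>M subprob_algebra ?S3"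
    using measurable_compose[OF measurable_Pair1' measurable_sa_kernel_extend[OF f_meas], of \<psi>]
    by (simp add: measurable_cong_sets[OF sets_sa_kernel refl])
  have T: "(\<lambda>\<psi>2. (\<psi>, \<psi>1, \<psi>2)) \<in> ?K \<psi>1 \<rightarrow>\<^sub>M ?S3" for \<psi>1
    by (simp add: measurable_cong_sets[OF sets_sa_kernel refl])
  have g2: "(\<lambda>\<psi>2. g (\<psi>, \<psi>1, \<psi>2)) \<in> borel_measurable ?S" for \<psi>1
    using g by measurable
  have g1: "(\<lambda>\<psi>1. \<Sum>z2\<in>UNIV. ennreal (P (snd \<psi>1) z2) * g (\<psi>, \<psi>1, sa_step f G \<alpha> \<psi>1 z2))
      \<in> borel_measurable ?S"
  proof (intro borel_measurable_sum borel_measurable_times_ennreal)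
    fix z2
    show "(\<lambda>\<psi>1. ennreal (P (snd \<psi>1) z2)) \<in> borel_measurable ?S"
      unfolding state_space_def by measurable
    have "(\<lambda>\<psi>1. (\<psi>, \<psi>1, sa_step f G \<alpha> \<psi>1 z2)) \<in> ?S \<rightarrow>\<^sub>M ?S3"
      using measurable_sa_step[OF f_meas] by measurable
    then show "(\<lambda>\<psi>1. g (\<psi>, \<psi>1, sa_step f G \<alpha> \<psi>1 z2)) \<in> borel_measurable ?S"
      using g by (rule measurable_compose)
  qed
  have "(\<integral>\<^sup>+w. g w \<partial>bind (?K \<psi>) (\<lambda>\<psi>1. distr (?K \<psi>1) ?S3 (\<lambda>\<psi>2. (\<psi>, \<psi>1, \<psi>2))))
      = (\<integral>\<^sup>+\<psi>1. (\<integral>\<^sup>+\<psi>2. g (\<psi>, \<psi>1, \<psi>2) \<partial>?K \<psi>1) \<partial>?K \<psi>)"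
    by (simp add: nn_integral_bind[OF g D] nn_integral_distr[OF T] g)
  also have "\<dots> = (\<Sum>z1\<in>UNIV. ennreal (P (snd \<psi>) z1) * (\<Sum>z2\<in>UNIV. ennreal (P z1 z2)
      * g (\<psi>, sa_step f G \<alpha> \<psi> z1, sa_step f G \<alpha> (sa_step f G \<alpha> \<psi> z1) z2)))"
    by (simp add: nn_integral_sa_kernel[OF P g2] nn_integral_sa_kernel[OF P g1])
  also have "\<dots> = (\<Sum>zs\<in>UNIV. ennreal (P (snd \<psi>) (fst zs) * P (fst zs) (snd zs)) * g (sa_path2 f G \<alpha> zs \<psi>))"
    using P
    by (simp add: sa_path2_def sum_distrib_left ennreal_mult stochastic_matrix_def mult.assoc
        sum.cartesian_product case_prod_beta' flip: UNIV_Times_UNIV)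
  finally show ?thesis .
qed

lemma
  fixes f :: "'d::euclidean_space \<Rightarrow> 'm \<Rightarrow> 'd" and G :: "'x::finite \<Rightarrow> 'm"
    and \<mu> :: "('d \<times> 'x) measure"
  assumes P: "stochastic_matrix P"
    and f_meas: "\<And>\<xi>. (\<lambda>\<theta>. f \<theta> \<xi>) \<in> borel_measurable borel"
    and sets_\<mu>: "sets \<mu> = sets state_space"
  shows sets_chain_law3_sa:
      "space \<mu> \<noteq> {} \<Longrightarrow> sets (chain_law3 (sa_kernel P G f \<alpha>) state_space \<mu> 0)
          = sets (state_space \<Otimes>\<^sub>M state_space \<Otimes>\<^sub>M state_space)"
    and nn_integral_chain_law3_sa:
      "g \<in> borel_measurable (state_space \<Otimes>\<^sub>M state_space \<Otimes>\<^sub>M state_space) \<Longrightarrow>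
        (\<integral>\<^sup>+w. g w \<partial>chain_law3 (sa_kernel P G f \<alpha>) state_space \<mu> 0)
          = (\<integral>\<^sup>+\<psi>. (\<Sum>zs\<in>UNIV. ennreal (P (snd \<psi>) (fst zs) * P (fst zs) (snd zs))
                * g (sa_path2 f G \<alpha> zs \<psi>)) \<partial>\<mu>)"
proof -
  let ?S3 = "state_space \<Otimes>\<^sub>M state_space \<Otimes>\<^sub>M state_space :: (('d \<times> 'x) \<times> ('d \<times> 'x) \<times> ('d \<times> 'x)) measure"
  let ?K = "sa_kernel P G f \<alpha>"
  let ?L = "\<lambda>\<psi>. bind (?K \<psi>) (\<lambda>\<psi>1. distr (?K \<psi>1) ?S3 (\<lambda>\<psi>2. (\<psi>, \<psi>1, \<psi>2)))"
  have law3: "chain_law3 ?K state_space \<mu> 0 = bind \<mu> ?L"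
    by (simp add: chain_law3_def)
  show "space \<mu> \<noteq> {} \<Longrightarrow> sets (chain_law3 ?K state_space \<mu> 0) = sets ?S3"
    unfolding law3 by (rule sets_bind) (auto intro!: sets_bind)
  have "?L \<in> \<mu> \<rightarrow>\<^sub>M subprob_algebra ?S3"
    using measurable_bind[OF measurable_sa_kernel[OF f_meas] measurable_sa_kernel_extend[OF f_meas]]
    by (simp add: measurable_cong_sets[OF sets_\<mu> refl])
  then show "g \<in> borel_measurable ?S3 \<Longrightarrow> (\<integral>\<^sup>+w. g w \<partial>chain_law3 ?K state_space \<mu> 0)
      = (\<integral>\<^sup>+\<psi>. (\<Sum>zs\<in>UNIV. ennreal (P (snd \<psi>) (fst zs) * P (fst zs) (snd zs))
            * g (sa_path2 f G \<alpha> zs \<psi>)) \<partial>\<mu>)"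
    by (simp add: law3 nn_integral_bind nn_integral_sa_two_steps[OF P f_meas])
qed

definition upsilon :: "real \<Rightarrow> ('d \<Rightarrow> 'x \<Rightarrow> 'd::real_vector) \<Rightarrow> ('d \<times> 'x) \<times> ('d \<times> 'x) \<times> ('d \<times> 'x) \<Rightarrow> 'd" where
  "upsilon \<alpha> fhat = (\<lambda>(\<psi>, \<psi>1, \<psi>2). - (1 / \<alpha>) *\<^sub>R (fhat (fst \<psi>1) (snd \<psi>2) - fhat (fst \<psi>) (snd \<psi>2)))"

locale sa_poisson_equation =
  fixes P :: "'x::finite \<Rightarrow> 'x \<Rightarrow> real"
    and \<pi> :: "'x \<Rightarrow> real"
    and G :: "'x \<Rightarrow> 'm::euclidean_space"
    and f :: "'d::euclidean_space \<Rightarrow> 'm \<Rightarrow> 'd"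
    and fbar :: "'d \<Rightarrow> 'd"
    and fhat :: "'d \<Rightarrow> 'x \<Rightarrow> 'd"
    and L :: real
  assumes P_stoch: "stochastic_matrix P"
    and P_irred: "irreducible_matrix P"
    and pi_nonneg: "\<And>z. 0 \<le> \<pi> z"
    and pi_sum: "(\<Sum>z\<in>UNIV. \<pi> z) = 1"
    and f_lipschitz: "\<And>\<theta> \<theta>' \<xi>. norm (f \<theta>' \<xi> - f \<theta> \<xi>) \<le> L * norm (\<theta>' - \<theta>)"
    and L_nonneg: "0 \<le> L"
    and fbar_eq: "\<And>\<theta>. fbar \<theta> = (\<Sum>z\<in>UNIV. \<pi> z *\<^sub>R f \<theta> (G z))"
    and poisson: "\<And>\<theta> z. (\<Sum>z'\<in>UNIV. P z z' *\<^sub>R fhat \<theta> z') = fhat \<theta> z - (f \<theta> (G z) - fbar \<theta>)"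
    and poisson_norm: "\<And>\<theta>. (\<Sum>z\<in>UNIV. \<pi> z *\<^sub>R fhat \<theta> z) = 0"
begin

lemma P_nonneg: "0 \<le> P z z'"
  using P_stoch by (simp add: stochastic_matrix_def)

lemma P_row_sum: "(\<Sum>z'\<in>UNIV. P z z') = 1"
  using P_stoch by (simp add: stochastic_matrix_def)

lemma P_le_1: "P z z' \<le> 1"
  using member_le_sum[of z' UNIV "P z"] P_nonneg by (simp add: P_row_sum)

lemma f_measurable: "(\<lambda>\<theta>. f \<theta> \<xi>) \<in> borel_measurable borel"
  by (rule borel_measurable_lipschitz_bound) (rule f_lipschitz)

lemma norm_f_le: "norm (f \<theta> \<xi>) \<le> norm (f 0 \<xi>) + L * norm \<theta>"
  using f_lipschitz[where \<theta>=0 and \<theta>'=\<theta> and \<xi>=\<xi>] norm_triangle_sub[of "f \<theta> \<xi>" "f 0 \<xi>"]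
  by simp

lemma fbar_lipschitz: "norm (fbar \<theta>' - fbar \<theta>) \<le> L * norm (\<theta>' - \<theta>)"
proof -
  have "norm (fbar \<theta>' - fbar \<theta>) = norm (\<Sum>z\<in>UNIV. \<pi> z *\<^sub>R (f \<theta>' (G z) - f \<theta> (G z)))"
    by (simp add: fbar_eq scaleR_diff_right sum_subtractf)
  also have "\<dots> \<le> (\<Sum>z\<in>UNIV. \<pi> z * (L * norm (\<theta>' - \<theta>)))"
    by (rule order_trans[OF norm_sum sum_mono]) (simp add: pi_nonneg f_lipschitz mult_left_mono)
  also have "\<dots> = L * norm (\<theta>' - \<theta>)"
    by (simp add: sum_distrib_right[symmetric] pi_sum)
  finally show ?thesis .
qed

lemma fbar_measurable: "fbar \<in> borel_measurable borel"
  by (rule borel_measurable_lipschitz_bound) (rule fbar_lipschitz)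

text \<open>The difference \<open>fhat \<theta>' - fhat \<theta>\<close> is itself a normalized solution of Poisson's equation,
  with forcing term of size at most \<open>2 L \<parallel>\<theta>' - \<theta>\<parallel>\<close>.\<close>

lemma fhat_lipschitz:
  obtains K where "0 \<le> K" and "\<And>\<theta> \<theta>' z. norm (fhat \<theta>' z - fhat \<theta> z) \<le> K * norm (\<theta>' - \<theta>)"
proof -
  obtain C where C: "0 \<le> C" "\<And>(D :: 'x \<Rightarrow> 'd) E z.
      (\<And>z. D z - (\<Sum>z'\<in>UNIV. P z z' *\<^sub>R D z') = E z) \<Longrightarrow> (\<Sum>z\<in>UNIV. \<pi> z *\<^sub>R D z) = 0
      \<Longrightarrow> norm (D z) \<le> C * (\<Sum>z\<in>UNIV. norm (E z))"
    using poisson_solution_bound[OF P_stoch P_irred pi_sum] by blast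
  show ?thesis
  proof (rule that[of "C * (real CARD('x) * (2 * L))"])
    show "0 \<le> C * (real CARD('x) * (2 * L))"
      using C(1) L_nonneg by simp
    fix \<theta> \<theta>' z
    define E where "E z = (f \<theta>' (G z) - f \<theta> (G z)) - (fbar \<theta>' - fbar \<theta>)" for z
    have "norm (E z) \<le> 2 * L * norm (\<theta>' - \<theta>)" for z
      using norm_triangle_ineq4[of "f \<theta>' (G z) - f \<theta> (G z)" "fbar \<theta>' - fbar \<theta>"]
        f_lipschitz[where \<theta>=\<theta> and \<theta>'=\<theta>' and \<xi>="G z"] fbar_lipschitz[where \<theta>'=\<theta>' and \<theta>=\<theta>]
      by (simp add: E_def)
    moreover have "norm (fhat \<theta>' z - fhat \<theta> z) \<le> C * (\<Sum>z\<in>UNIV. norm (E z))"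
      by (rule C(2)) (simp_all add: E_def scaleR_diff_right sum_subtractf poisson poisson_norm)
    ultimately have "norm (fhat \<theta>' z - fhat \<theta> z) \<le> C * (\<Sum>z\<in>(UNIV::'x set). 2 * L * norm (\<theta>' - \<theta>))"
      by (meson C(1) mult_left_mono order_trans sum_mono)
    then show "norm (fhat \<theta>' z - fhat \<theta> z) \<le> C * (real CARD('x) * (2 * L)) * norm (\<theta>' - \<theta>)"
      by simp
  qed
qed

lemma fhat_measurable: "(\<lambda>\<theta>. fhat \<theta> z) \<in> borel_measurable borel"
  using fhat_lipschitz borel_measurable_lipschitz_bound by metis

definition P_fhat :: "'d \<times> 'x \<Rightarrow> 'd" where
  "P_fhat \<psi> = (\<Sum>z'\<in>UNIV. P (snd \<psi>) z' *\<^sub>R fhat (fst \<psi>) z')"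

lemma P_fhat_measurable: "P_fhat \<in> borel_measurable state_space"
  unfolding P_fhat_def[abs_def] state_space_def
  using fhat_measurable by measurable

lemma norm_P_fhat_le: "norm (P_fhat \<psi>) \<le> (\<Sum>z\<in>UNIV. norm (fhat 0 z)) + real CARD('x) * K * norm (fst \<psi>)"
  if "\<And>\<theta> \<theta>' z. norm (fhat \<theta>' z - fhat \<theta> z) \<le> K * norm (\<theta>' - \<theta>)"
proof -
  have "norm (P_fhat \<psi>) \<le> (\<Sum>z\<in>UNIV. norm (P (snd \<psi>) z *\<^sub>R fhat (fst \<psi>) z))"
    unfolding P_fhat_def by (rule norm_sum)
  also have "\<dots> \<le> (\<Sum>z\<in>UNIV. norm (fhat 0 z) + K * norm (fst \<psi>))"
  proof (intro sum_mono)
    fix z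
    have "norm (P (snd \<psi>) z *\<^sub>R fhat (fst \<psi>) z) \<le> norm (fhat (fst \<psi>) z)"
      using P_le_1 P_nonneg by (simp add: mult_left_le_one_le)
    also have "\<dots> \<le> norm (fhat 0 z) + K * norm (fst \<psi>)"
      using that[where \<theta>=0 and \<theta>'="fst \<psi>" and z=z] norm_triangle_sub[of "fhat (fst \<psi>) z" "fhat 0 z"] by simp
    finally show "norm (P (snd \<psi>) z *\<^sub>R fhat (fst \<psi>) z) \<le> norm (fhat 0 z) + K * norm (fst \<psi>)" .
  qed
  also have "\<dots> = (\<Sum>z\<in>UNIV. norm (fhat 0 z)) + real CARD('x) * K * norm (fst \<psi>)"
    by (simp add: sum.distrib)
  finally show ?thesis .
qed

end

locale sa_stationary = sa_poisson_equation P \<pi> G f fbar fhat L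
  for P :: "'x::finite \<Rightarrow> 'x \<Rightarrow> real" and \<pi> G
    and f :: "'d::euclidean_space \<Rightarrow> 'm::euclidean_space \<Rightarrow> 'd" and fbar fhat L +
  fixes \<alpha> :: real and W :: "('d \<times> 'x) measure"
  assumes alpha_pos: "0 < \<alpha>"
    and W_prob: "prob_space W"
    and sets_W: "sets W = sets state_space"
    and W_invariant: "bind W (sa_kernel P G f \<alpha>) = W"
    and W_first_moment: "(\<integral>\<^sup>+\<psi>. ennreal (norm (fst \<psi>)) \<partial>W) < \<infinity>"
begin

abbreviation law3 :: "(('d \<times> 'x) \<times> ('d \<times> 'x) \<times> ('d \<times> 'x)) measure" where
  "law3 \<equiv> chain_law3 (sa_kernel P G f \<alpha>) state_space W 0"

lemma chain_law_stationary: "chain_law (sa_kernel P G f \<alpha>) W n = W"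
  by (induction n) (simp_all add: W_invariant)

lemma chain_law3_stationary: "chain_law3 (sa_kernel P G f \<alpha>) state_space W n = law3"
  by (simp add: chain_law3_def chain_law_stationary)

lemma integrable_linear_growth:
  fixes F :: "'d \<times> 'x \<Rightarrow> 'b::{banach, second_countable_topology}"
  assumes F: "F \<in> borel_measurable state_space"
    and growth: "\<And>\<psi>. norm (F \<psi>) \<le> a + b * norm (fst \<psi>)"
  shows "integrable W F"
proof (rule Bochner_Integration.integrable_bound)
  interpret prob_space W
    by (rule W_prob)
  have "integrable W (\<lambda>\<psi>. norm (fst \<psi>))"
    using W_first_moment sets_W
    by (simp add: integrable_iff_bounded measurable_cong_sets[OF sets_W refl] state_space_def)
  then show "integrable W (\<lambda>\<psi>. a + b * norm (fst \<psi>))"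
    by simp
  show "F \<in> borel_measurable W"
    using F by (simp add: measurable_cong_sets[OF sets_W refl])
  show "AE \<psi> in W. norm (F \<psi>) \<le> norm (a + b * norm (fst \<psi>))"
    using growth by (intro AE_I2) (metis real_norm_def abs_ge_self order_trans)
qed

lemma mixture_of_images_step:
  "mixture_of_images W W UNIV (\<lambda>z' \<psi>. P (snd \<psi>) z') (\<lambda>z' \<psi>. sa_step f G \<alpha> \<psi> z')"
proof
  show "(\<lambda>\<psi>. sa_step f G \<alpha> \<psi> z') \<in> W \<rightarrow>\<^sub>M W" for z'
    using measurable_sa_step[where f=f, OF f_measurable]
    by (simp add: measurable_cong_sets[OF sets_W sets_W])
  show "(\<lambda>\<psi>. P (snd \<psi>) z') \<in> borel_measurable W" for z'
    by (simp add: measurable_cong_sets[OF sets_W refl] state_space_def)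
  fix g :: "'d \<times> 'x \<Rightarrow> ennreal"
  assume "g \<in> borel_measurable W"
  then have "(\<integral>\<^sup>+\<psi>. g \<psi> \<partial>bind W (sa_kernel P G f \<alpha>))
      = (\<integral>\<^sup>+\<psi>. (\<Sum>z'\<in>UNIV. ennreal (P (snd \<psi>) z') * g (sa_step f G \<alpha> \<psi> z')) \<partial>W)"
    by (intro nn_integral_bind_sa_kernel[where f=f, OF P_stoch f_measurable sets_W])
      (simp add: measurable_cong_sets[OF sets_W refl])
  then show "(\<integral>\<^sup>+\<psi>. g \<psi> \<partial>W) = (\<integral>\<^sup>+\<psi>. (\<Sum>z'\<in>UNIV. ennreal (P (snd \<psi>) z') * g (sa_step f G \<alpha> \<psi> z')) \<partial>W)"
    by (simp only: W_invariant)
qed (simp_all add: P_nonneg)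

lemma
  fixes h :: "'d \<times> 'x \<Rightarrow> 'b::euclidean_space"
  assumes h: "integrable W h"
  shows integrable_step_mean: "integrable W (\<lambda>\<psi>. \<Sum>z'\<in>UNIV. P (snd \<psi>) z' *\<^sub>R h (sa_step f G \<alpha> \<psi> z'))"
    and integral_step_mean: "(\<integral>\<psi>. (\<Sum>z'\<in>UNIV. P (snd \<psi>) z' *\<^sub>R h (sa_step f G \<alpha> \<psi> z')) \<partial>W) = integral\<^sup>L W h"
proof -
  interpret mixture_of_images W W UNIV "\<lambda>z' \<psi>. P (snd \<psi>) z'" "\<lambda>z' \<psi>. sa_step f G \<alpha> \<psi> z'"
    by (rule mixture_of_images_step)
  show "integrable W (\<lambda>\<psi>. \<Sum>z'\<in>UNIV. P (snd \<psi>) z' *\<^sub>R h (sa_step f G \<alpha> \<psi> z'))"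
    using integrable_mixture[OF h] .
  show "(\<integral>\<psi>. (\<Sum>z'\<in>UNIV. P (snd \<psi>) z' *\<^sub>R h (sa_step f G \<alpha> \<psi> z')) \<partial>W) = integral\<^sup>L W h"
    using integral_mixture[OF h] .
qed

lemma sets_law3: "sets law3 = sets (state_space \<Otimes>\<^sub>M state_space \<Otimes>\<^sub>M state_space)"
  using sets_chain_law3_sa[where f=f, OF P_stoch f_measurable sets_W] prob_space.not_empty[OF W_prob] by blast

lemma mixture_of_images_path2:
  "mixture_of_images law3 W UNIV (\<lambda>zs \<psi>. P (snd \<psi>) (fst zs) * P (fst zs) (snd zs)) (sa_path2 f G \<alpha>)"
proof
  show "sa_path2 f G \<alpha> zs \<in> W \<rightarrow>\<^sub>M law3" for zs
    unfolding measurable_cong_sets[OF sets_W sets_law3] sa_path2_def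
    using measurable_sa_step[where f=f, OF f_measurable] by measurable
  show "(\<lambda>\<psi>. P (snd \<psi>) (fst zs) * P (fst zs) (snd zs)) \<in> borel_measurable W" for zs
    by (simp add: measurable_cong_sets[OF sets_W refl] state_space_def)
  show "(\<integral>\<^sup>+w. g w \<partial>law3) = (\<integral>\<^sup>+\<psi>. (\<Sum>zs\<in>UNIV. ennreal (P (snd \<psi>) (fst zs) * P (fst zs) (snd zs))
      * g (sa_path2 f G \<alpha> zs \<psi>)) \<partial>W)" if "g \<in> borel_measurable law3" for g
    using that by (simp add: nn_integral_chain_law3_sa[where f=f, OF P_stoch f_measurable sets_W]
        measurable_cong_sets[OF sets_law3 refl])
qed (simp_all add: P_nonneg)

lemma integrable_fst: "integrable W fst"
  by (rule integrable_linear_growth[where a=0 and b=1]) (simp_all add: state_space_def)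

lemma integrable_fbar: "integrable W (\<lambda>\<psi>. fbar (fst \<psi>))"
proof (rule integrable_linear_growth[where a="norm (fbar 0)" and b=L])
  show "(\<lambda>\<psi>. fbar (fst \<psi>)) \<in> borel_measurable state_space"
    unfolding state_space_def using fbar_measurable by measurable
  show "norm (fbar (fst \<psi>)) \<le> norm (fbar 0) + L * norm (fst \<psi>)" for \<psi>
    using fbar_lipschitz[where \<theta>'="fst \<psi>" and \<theta>=0] norm_triangle_sub[of "fbar (fst \<psi>)" "fbar 0"]
    by simp
qed

lemma integrable_P_fhat: "integrable W P_fhat"
proof -
  obtain K where "0 \<le> K" and K: "\<And>\<theta> \<theta>' z. norm (fhat \<theta>' z - fhat \<theta> z) \<le> K * norm (\<theta>' - \<theta>)"
    using fhat_lipschitz by metis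
  show ?thesis
    by (rule integrable_linear_growth[OF P_fhat_measurable norm_P_fhat_le[OF K]])
qed

lemma upsilon_measurable: "upsilon \<alpha> fhat \<in> borel_measurable law3"
proof -
  define F where "F z w = - (1 / \<alpha>) *\<^sub>R (fhat (fst (fst (snd w))) z - fhat (fst (fst w)) z)"
    for z and w :: "('d \<times> 'x) \<times> ('d \<times> 'x) \<times> ('d \<times> 'x)"
  have "F z \<in> borel_measurable law3" for z
    unfolding measurable_cong_sets[OF sets_law3 refl] unfolding F_def state_space_def
    using fhat_measurable[of z] by measurable
  moreover have "(\<lambda>w. snd (snd (snd w))) \<in> law3 \<rightarrow>\<^sub>M count_space UNIV"
    unfolding measurable_cong_sets[OF sets_law3 refl] unfolding state_space_def by measurable
  ultimately have "(\<lambda>w. F (snd (snd (snd w))) w) \<in> borel_measurable law3"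
    by (rule measurable_compose_countable') simp
  then show ?thesis
    by (simp add: upsilon_def F_def case_prod_beta')
qed

lemma upsilon_sa_path2:
  "upsilon \<alpha> fhat (sa_path2 f G \<alpha> zs \<psi>)
    = - (1 / \<alpha>) *\<^sub>R (fhat (fst \<psi> + \<alpha> *\<^sub>R f (fst \<psi>) (G (fst zs))) (snd zs) - fhat (fst \<psi>) (snd zs))"
  by (simp add: upsilon_def sa_path2_def sa_step_def)

lemma norm_upsilon_sa_path2_le:
  assumes K: "\<And>\<theta> \<theta>' z. norm (fhat \<theta>' z - fhat \<theta> z) \<le> K * norm (\<theta>' - \<theta>)" and "0 \<le> K"
  shows "norm (upsilon \<alpha> fhat (sa_path2 f G \<alpha> zs \<psi>)) \<le> K * norm (f 0 (G (fst zs))) + K * L * norm (fst \<psi>)"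
proof -
  have "norm (upsilon \<alpha> fhat (sa_path2 f G \<alpha> zs \<psi>))
      = norm (fhat (fst \<psi> + \<alpha> *\<^sub>R f (fst \<psi>) (G (fst zs))) (snd zs) - fhat (fst \<psi>) (snd zs)) / \<alpha>"
    using alpha_pos by (simp add: upsilon_sa_path2)
  also have "\<dots> \<le> K * norm (\<alpha> *\<^sub>R f (fst \<psi>) (G (fst zs))) / \<alpha>"
    using alpha_pos K[where \<theta>'="fst \<psi> + \<alpha> *\<^sub>R f (fst \<psi>) (G (fst zs))" and \<theta>="fst \<psi>"]
    by (intro divide_right_mono) simp_all
  also have "\<dots> = K * norm (f (fst \<psi>) (G (fst zs)))"
    using alpha_pos by simp
  also have "\<dots> \<le> K * (norm (f 0 (G (fst zs))) + L * norm (fst \<psi>))"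
    using \<open>0 \<le> K\<close> by (intro mult_left_mono norm_f_le)
  finally show ?thesis
    by (simp add: algebra_simps)
qed

lemma integrable_upsilon: "integrable law3 (upsilon \<alpha> fhat)"
proof -
  interpret mixture_of_images law3 W UNIV "\<lambda>zs \<psi>. P (snd \<psi>) (fst zs) * P (fst zs) (snd zs)" "sa_path2 f G \<alpha>"
    by (rule mixture_of_images_path2)
  obtain K where K: "0 \<le> K" "\<And>\<theta> \<theta>' z. norm (fhat \<theta>' z - fhat \<theta> z) \<le> K * norm (\<theta>' - \<theta>)"
    using fhat_lipschitz by metis
  let ?g = "\<lambda>\<psi>. \<Sum>zs\<in>UNIV. P (snd \<psi>) (fst zs) * P (fst zs) (snd zs) * norm (upsilon \<alpha> fhat (sa_path2 f G \<alpha> zs \<psi>))"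
  have "integrable W ?g"
  proof (rule integrable_linear_growth)
    show "?g \<in> borel_measurable state_space"
      using borel_measurable_mixture[of "\<lambda>w. norm (upsilon \<alpha> fhat w)"] upsilon_measurable
      by (simp add: measurable_cong_sets[OF sets_W refl])
    fix \<psi>
    have "norm (?g \<psi>) = ?g \<psi>"
      using P_nonneg by (simp add: sum_nonneg)
    also have "\<dots> \<le> (\<Sum>zs\<in>UNIV. K * norm (f 0 (G (fst (zs :: 'x \<times> 'x)))) + K * L * norm (fst \<psi>))"
    proof (intro sum_mono)
      fix zs :: "'x \<times> 'x"
      have "P (snd \<psi>) (fst zs) * P (fst zs) (snd zs) \<le> 1"
        using P_le_1 P_nonneg by (simp add: mult_le_one)
      then show "P (snd \<psi>) (fst zs) * P (fst zs) (snd zs) * norm (upsilon \<alpha> fhat (sa_path2 f G \<alpha> zs \<psi>))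
          \<le> K * norm (f 0 (G (fst zs))) + K * L * norm (fst \<psi>)"
        using norm_upsilon_sa_path2_le[OF K(2,1)] P_nonneg
        by (meson mult_left_le_one_le mult_nonneg_nonneg norm_ge_zero order_trans)
    qed
    also have "\<dots> = (\<Sum>zs\<in>UNIV. K * norm (f 0 (G (fst (zs :: 'x \<times> 'x))))) + real CARD('x \<times> 'x) * (K * L) * norm (fst \<psi>)"
      by (simp add: sum.distrib)
    finally show "norm (?g \<psi>) \<le> (\<Sum>zs\<in>UNIV. K * norm (f 0 (G (fst (zs :: 'x \<times> 'x))))) + real CARD('x \<times> 'x) * (K * L) * norm (fst \<psi>)" .
  qed
  then show ?thesis
    by (rule integrable_of_mixture[OF upsilon_measurable])
qed

lemma sum_sa_path2_upsilon:
  "(\<Sum>zs\<in>UNIV. (P (snd \<psi>) (fst zs) * P (fst zs) (snd zs)) *\<^sub>R upsilon \<alpha> fhat (sa_path2 f G \<alpha> zs \<psi>))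
    = - (1 / \<alpha>) *\<^sub>R ((\<Sum>z1\<in>UNIV. P (snd \<psi>) z1 *\<^sub>R P_fhat (sa_step f G \<alpha> \<psi> z1))
        - (\<Sum>z1\<in>UNIV. P (snd \<psi>) z1 *\<^sub>R P_fhat (fst \<psi>, z1)))"
proof -
  have "(\<Sum>zs\<in>UNIV. (P (snd \<psi>) (fst zs) * P (fst zs) (snd zs)) *\<^sub>R upsilon \<alpha> fhat (sa_path2 f G \<alpha> zs \<psi>))
      = - (1 / \<alpha>) *\<^sub>R (\<Sum>z1\<in>UNIV. P (snd \<psi>) z1 *\<^sub>R (\<Sum>z2\<in>UNIV. P z1 z2 *\<^sub>R
          (fhat (fst (sa_step f G \<alpha> \<psi> z1)) z2 - fhat (fst \<psi>) z2)))"
    by (simp add: upsilon_sa_path2 sa_step_def scaleR_sum_right mult.commute sum.cartesian_product'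
        flip: UNIV_Times_UNIV)
  then show ?thesis
    by (simp add: P_fhat_def scaleR_diff_right sum_subtractf)
qed

lemma sum_P_fhat_fixed_theta:
  "(\<Sum>z1\<in>UNIV. P (snd \<psi>) z1 *\<^sub>R P_fhat (fst \<psi>, z1))
    = P_fhat \<psi> - (1 / \<alpha>) *\<^sub>R ((\<Sum>z1\<in>UNIV. P (snd \<psi>) z1 *\<^sub>R fst (sa_step f G \<alpha> \<psi> z1)) - fst \<psi>)
      + fbar (fst \<psi>)"
proof -
  obtain \<theta> z where \<psi>: "\<psi> = (\<theta>, z)"
    by fastforce
  have "(\<Sum>z1\<in>UNIV. P z z1 *\<^sub>R P_fhat (\<theta>, z1))
      = (\<Sum>z1\<in>UNIV. P z z1 *\<^sub>R fhat \<theta> z1 - P z z1 *\<^sub>R f \<theta> (G z1) + P z z1 *\<^sub>R fbar \<theta>)"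
    by (simp add: P_fhat_def poisson algebra_simps)
  also have "\<dots> = P_fhat \<psi> - (\<Sum>z1\<in>UNIV. P z z1 *\<^sub>R f \<theta> (G z1)) + fbar \<theta>"
    by (simp add: sum.distrib sum_subtractf P_fhat_def \<psi> P_row_sum flip: scaleR_sum_left)
  also have "(\<Sum>z1\<in>UNIV. P z z1 *\<^sub>R f \<theta> (G z1))
      = (1 / \<alpha>) *\<^sub>R ((\<Sum>z1\<in>UNIV. P z z1 *\<^sub>R fst (sa_step f G \<alpha> \<psi> z1)) - \<theta>)"
    using alpha_pos
    by (simp add: \<psi> sa_step_def scaleR_add_right sum.distrib scaleR_sum_right P_row_sum
        flip: scaleR_sum_left)
  finally show ?thesis
    by (simp add: \<psi>)
qed

lemma integral_fbar_eq_upsilon: "(\<integral>\<psi>. fbar (fst \<psi>) \<partial>W) = \<alpha> *\<^sub>R (\<integral>w. upsilon \<alpha> fhat w \<partial>law3)"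
proof -
  interpret mixture_of_images law3 W UNIV "\<lambda>zs \<psi>. P (snd \<psi>) (fst zs) * P (fst zs) (snd zs)" "sa_path2 f G \<alpha>"
    by (rule mixture_of_images_path2)
  define mean_P_fhat where "mean_P_fhat \<psi> = (\<Sum>z1\<in>UNIV. P (snd \<psi>) z1 *\<^sub>R P_fhat (sa_step f G \<alpha> \<psi> z1))" for \<psi>
  define mean_fst where "mean_fst \<psi> = (\<Sum>z1\<in>UNIV. P (snd \<psi>) z1 *\<^sub>R fst (sa_step f G \<alpha> \<psi> z1))" for \<psi>
  have "(\<integral>w. upsilon \<alpha> fhat w \<partial>law3)
      = (\<integral>\<psi>. (\<Sum>zs\<in>UNIV. (P (snd \<psi>) (fst zs) * P (fst zs) (snd zs)) *\<^sub>R upsilon \<alpha> fhat (sa_path2 f G \<alpha> zs \<psi>)) \<partial>W)"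
    by (rule integral_mixture[OF integrable_upsilon, symmetric])
  also have "\<dots> = (\<integral>\<psi>. - (1 / \<alpha>) *\<^sub>R (mean_P_fhat \<psi> - P_fhat \<psi>
      + (1 / \<alpha>) *\<^sub>R (mean_fst \<psi> - fst \<psi>) - fbar (fst \<psi>)) \<partial>W)"
    unfolding sum_sa_path2_upsilon sum_P_fhat_fixed_theta
    by (simp add: mean_P_fhat_def mean_fst_def algebra_simps)
  also have "\<dots> = - (1 / \<alpha>) *\<^sub>R ((\<integral>\<psi>. mean_P_fhat \<psi> \<partial>W) - integral\<^sup>L W P_fhat
      + (1 / \<alpha>) *\<^sub>R ((\<integral>\<psi>. mean_fst \<psi> \<partial>W) - integral\<^sup>L W fst) - (\<integral>\<psi>. fbar (fst \<psi>) \<partial>W))"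
    using integrable_step_mean[OF integrable_P_fhat] integrable_step_mean[OF integrable_fst]
      integrable_P_fhat integrable_fst integrable_fbar
    by (simp add: mean_P_fhat_def[abs_def] mean_fst_def[abs_def])
  also have "\<dots> = (1 / \<alpha>) *\<^sub>R (\<integral>\<psi>. fbar (fst \<psi>) \<partial>W)"
    using integral_step_mean[OF integrable_P_fhat] integral_step_mean[OF integrable_fst]
    by (simp add: mean_P_fhat_def[abs_def] mean_fst_def[abs_def])
  finally show ?thesis
    using alpha_pos by simp
qed

end

theorem proposition2p14:
  fixes P :: "'x::finite \<Rightarrow> 'x \<Rightarrow> real"
    and \<pi> :: "'x \<Rightarrow> real"
    and G :: "'x \<Rightarrow> 'm::euclidean_space"
    and f :: "'d::euclidean_space \<Rightarrow> 'm \<Rightarrow> 'd"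
    and fbar :: "'d \<Rightarrow> 'd"
    and fhat :: "'d \<Rightarrow> 'x \<Rightarrow> 'd"
    and \<alpha> :: real
    and W :: "('d \<times> 'x) measure"
  assumes P_stoch: "stochastic_matrix P"
    and P_irred: "irreducible_matrix P"
    and pi_inv: "invariant_prob P \<pi>"
    and pi_unique: "\<And>\<mu>. invariant_prob P \<mu> \<Longrightarrow> \<mu> = \<pi>"
    and f_lip: "\<exists>Lf. \<forall>\<theta> \<theta>' \<xi> \<xi>'.
        norm (f \<theta>' \<xi> - f \<theta> \<xi>) + norm (f \<theta> \<xi>' - f \<theta> \<xi>) \<le> Lf * (norm (\<theta>' - \<theta>) + norm (\<xi>' - \<xi>))"
    and fbar_def: "\<And>\<theta>. fbar \<theta> = (\<Sum>z\<in>UNIV. \<pi> z *\<^sub>R f \<theta> (G z))"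
    and poisson: "\<And>\<theta> z. (\<Sum>z'\<in>UNIV. P z z' *\<^sub>R fhat \<theta> z') = fhat \<theta> z - (f \<theta> (G z) - fbar \<theta>)"
    and poisson_norm: "\<And>\<theta>. (\<Sum>z\<in>UNIV. \<pi> z *\<^sub>R fhat \<theta> z) = 0"
    and alpha_pos: "\<alpha> > 0"
    and bounded_moment: "\<exists>\<psi>0. \<exists>B < \<infinity>. \<forall>n.
        (\<integral>\<^sup>+ \<psi>. ennreal ((norm (fst \<psi>))\<^sup>2)
           \<partial>(chain_law (sa_kernel P G f \<alpha>) (return state_space \<psi>0) n)) \<le> B"
    and varpi_prob: "prob_space W"
    and varpi_sets: "sets W = sets state_space"
    and varpi_inv: "bind W (sa_kernel P G f \<alpha>) = W"
    and varpi_moment: "(\<integral>\<^sup>+ \<psi>. ennreal (norm (fst \<psi>)) \<partial>W) < \<infinity>"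
  shows "\<forall>n.
      let L1 = chain_law (sa_kernel P G f \<alpha>) W n;
          L3 = chain_law3 (sa_kernel P G f \<alpha>) state_space W n;
          L1' = chain_law (sa_kernel P G f \<alpha>) W 0;
          L3' = chain_law3 (sa_kernel P G f \<alpha>) state_space W 0;
          Ups = (\<lambda>(\<psi>, \<psi>1, \<psi>2). - (1 / \<alpha>) *\<^sub>R (fhat (fst \<psi>1) (snd \<psi>2) - fhat (fst \<psi>) (snd \<psi>2)))
      in integrable L1 (\<lambda>\<psi>. fbar (fst \<psi>))
       \<and> integrable L3 Ups
       \<and> (\<integral>\<psi>. fbar (fst \<psi>) \<partial>L1) = \<alpha> *\<^sub>R (\<integral>w. Ups w \<partial>L3)
       \<and> (\<integral>\<psi>. fbar (fst \<psi>) \<partial>L1) = (\<integral>\<psi>. fbar (fst \<psi>) \<partial>L1')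
       \<and> (\<integral>w. Ups w \<partial>L3) = (\<integral>w. Ups w \<partial>L3')"
proof -
  obtain Lf where Lf: "\<forall>\<theta> \<theta>' \<xi> \<xi>'.
      norm (f \<theta>' \<xi> - f \<theta> \<xi>) + norm (f \<theta> \<xi>' - f \<theta> \<xi>) \<le> Lf * (norm (\<theta>' - \<theta>) + norm (\<xi>' - \<xi>))"
    using f_lip by blast
  have f_lipschitz: "norm (f \<theta>' \<xi> - f \<theta> \<xi>) \<le> max Lf 0 * norm (\<theta>' - \<theta>)" for \<theta> \<theta>' \<xi>
  proof -
    have "norm (f \<theta>' \<xi> - f \<theta> \<xi>) \<le> Lf * norm (\<theta>' - \<theta>)"
      using Lf[rule_format, where \<theta>=\<theta> and \<theta>'=\<theta>' and \<xi>=\<xi> and \<xi>'=\<xi>] by simp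
    also have "\<dots> \<le> max Lf 0 * norm (\<theta>' - \<theta>)"
      by (intro mult_right_mono) auto
    finally show ?thesis .
  qed
  have pi_prob: "\<And>z. 0 \<le> \<pi> z" "(\<Sum>z\<in>UNIV. \<pi> z) = 1"
    using pi_inv by (simp_all add: invariant_prob_def)
  interpret sa_stationary P \<pi> G f fbar fhat "max Lf 0" \<alpha> W
    by (intro sa_stationary.intro sa_poisson_equation.intro sa_stationary_axioms.intro)
      (rule assms f_lipschitz pi_prob | simp)+
  show ?thesis
    unfolding Let_def upsilon_def[symmetric] chain_law_stationary
    using integrable_fbar integrable_upsilon integral_fbar_eq_upsilon
    by (metis chain_law3_stationary)
qed

end
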